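(* Let $\mathcal X=\mathcal X_1\times\cdots\times\mathcal X_n$ with $\mathcal X_i\subseteq\mathbb R^{d_i}$, and let $f_1,\dots,f_m:\mathcal X\to\mathbb R$ be BDC functions (with respect to this block structure). Then the following functions are also BDC: (i) $\sum_{r=1}^m\alpha_r f_r$ for any $\alpha_1,\dots,\alpha_m\in\mathbb R$; (ii) $\max_{r=1,\dots,m} f_r$ (pointwise); (iii) $\min_{r=1,\dots,m} f_r$ (pointwise).
   Context: Block notation: for $\bm\theta\in\mathcal X$, $\theta_i\in\mathcal X_i$ denotes its $i$th block and $\bar{\bm\theta}_i$ denotes the vector obtained from $\bm\theta$ by replacing the $i$th block by $0$; $\bar{\mathcal X}_i=\mathcal X_1\times\cdots\times\{0\}^{d_i}\times\cdots\times\mathcal X_n$. A function $f:\mathcal X\to\mathbb R$ is called BDC (multi-block difference-of-convex) if for every $i\in\{1,\dots,n\}$ there exist functions $g_i,h_i:\mathcal X_i\times\bar{\mathcal X}_i\to\mathbb R$ such that $f(\bm\theta)=g_i(\theta_i;\bar{\bm\theta}_i)-h_i(\theta_i;\bar{\bm\theta}_i)$ for all $\bm\theta\in\mathcal X$, and for every fixed $\bar{\bm\theta}_i$ the functions $g_i(\cdot;\bar{\bm\theta}_i)$ and $h_i(\cdot;\bar{\bm\theta}_i)$ are convex in $\theta_i$. *)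

theory Defs
  imports "HOL-Analysis.Analysis"
begin

text \<open>The coordinates are
partitioned into n blocks B 0, ..., B (n-1); block i is identified with the coordinate
subspace of vectors vanishing outside B i (a copy of R^(d_i), d_i = card (B i)).\<close>

definition is_block_partition :: "nat \<Rightarrow> (nat \<Rightarrow> ('k::finite) set) \<Rightarrow> bool" where
  "is_block_partition n B \<longleftrightarrow>
     (\<forall>i<n. \<forall>j<n. i \<noteq> j \<longrightarrow> B i \<inter> B j = {}) \<and> (\<Union>i<n. B i) = UNIV"

definition blk :: "(nat \<Rightarrow> ('k::finite) set) \<Rightarrow> nat \<Rightarrow> real^'k \<Rightarrow> real^'k" where
  "blk B i \<theta> = (\<chi> j. if j \<in> B i then \<theta> $ j else 0)"

definition bar :: "(nat \<Rightarrow> ('k::finite) set) \<Rightarrow> nat \<Rightarrow> real^'k \<Rightarrow> real^'k" where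
  "bar B i \<theta> = (\<chi> j. if j \<in> B i then 0 else \<theta> $ j)"

definition prodX :: "nat \<Rightarrow> (nat \<Rightarrow> ('k::finite) set) \<Rightarrow> (nat \<Rightarrow> (real^'k) set) \<Rightarrow> (real^'k) set" where
  "prodX n B Xs = {\<theta>. \<forall>i<n. blk B i \<theta> \<in> Xs i}"

definition barX :: "nat \<Rightarrow> (nat \<Rightarrow> ('k::finite) set) \<Rightarrow> (nat \<Rightarrow> (real^'k) set) \<Rightarrow> nat \<Rightarrow> (real^'k) set" where
  "barX n B Xs i = {\<theta>. blk B i \<theta> = 0 \<and> (\<forall>j<n. j \<noteq> i \<longrightarrow> blk B j \<theta> \<in> Xs j)}"

definition BDC :: "nat \<Rightarrow> (nat \<Rightarrow> ('k::finite) set) \<Rightarrow> (nat \<Rightarrow> (real^'k) set) \<Rightarrow> (real^'k \<Rightarrow> real) \<Rightarrow> bool" where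
  "BDC n B Xs f \<longleftrightarrow>
     (\<forall>i<n. \<exists>g h :: real^'k \<Rightarrow> real^'k \<Rightarrow> real.
        (\<forall>\<theta>\<in>prodX n B Xs. f \<theta> = g (blk B i \<theta>) (bar B i \<theta>) - h (blk B i \<theta>) (bar B i \<theta>)) \<and>
        (\<forall>\<theta>b\<in>barX n B Xs i. convex_on (Xs i) (\<lambda>t. g t \<theta>b) \<and> convex_on (Xs i) (\<lambda>t. h t \<theta>b)))"

end

theory Submission
  imports Defs
begin

text \<open>Everything is done one block i at a time.  Sums and nonnegative multiples of convex
functions are convex and negation swaps the two convex parts, which handles linear
combinations.  For the maximum, the identity
  max (g1 - h1) (g2 - h2) = max (g1 + h2) (g2 + h1) - (h1 + h2)
exhibits a difference of convex functions, since a maximum of convex functions is convex;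
the minimum is -max(-f1, -f2).\<close>

lemma convex_on_max:
  fixes f g :: "'a::real_vector \<Rightarrow> real"
  assumes f: "convex_on S f" and g: "convex_on S g"
  shows "convex_on S (\<lambda>x. max (f x) (g x))"
proof (rule convex_onI)
  show "convex S"
    using f by (rule convex_on_imp_convex)
next
  fix t :: real and x y
  assume t: "0 < t" "t < 1" and xy: "x \<in> S" "y \<in> S"
  let ?z = "(1 - t) *\<^sub>R x + t *\<^sub>R y"
  have bound: "(1 - t) * u x + t * u y \<le> (1 - t) * max (f x) (g x) + t * max (f y) (g y)"
    if "u = f \<or> u = g" for u
    using t that by (intro add_mono mult_left_mono) auto
  have "f ?z \<le> (1 - t) * f x + t * f y" "g ?z \<le> (1 - t) * g x + t * g y"
    using t xy by (auto intro: convex_onD[OF f] convex_onD[OF g])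
  then show "max (f ?z) (g ?z) \<le> (1 - t) * max (f x) (g x) + t * max (f y) (g y)"
    using bound[of f] bound[of g] by simp
qed

definition dc_decomposition ::
    "nat \<Rightarrow> (nat \<Rightarrow> ('k::finite) set) \<Rightarrow> (nat \<Rightarrow> (real^'k) set) \<Rightarrow> nat \<Rightarrow> (real^'k \<Rightarrow> real) \<Rightarrow>
     (real^'k \<Rightarrow> real^'k \<Rightarrow> real) \<Rightarrow> (real^'k \<Rightarrow> real^'k \<Rightarrow> real) \<Rightarrow> bool" where
  "dc_decomposition n B Xs i f g h \<longleftrightarrow>
     (\<forall>\<theta>\<in>prodX n B Xs. f \<theta> = g (blk B i \<theta>) (bar B i \<theta>) - h (blk B i \<theta>) (bar B i \<theta>)) \<and>
     (\<forall>\<theta>b\<in>barX n B Xs i. convex_on (Xs i) (\<lambda>t. g t \<theta>b) \<and> convex_on (Xs i) (\<lambda>t. h t \<theta>b))"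

lemma BDC_iff_dc_decomposition:
  "BDC n B Xs f \<longleftrightarrow> (\<forall>i<n. \<exists>g h. dc_decomposition n B Xs i f g h)"
  by (simp add: BDC_def dc_decomposition_def)

lemma dc_decomposition_add:
  assumes "dc_decomposition n B Xs i f1 g1 h1" "dc_decomposition n B Xs i f2 g2 h2"
  shows "dc_decomposition n B Xs i (\<lambda>\<theta>. f1 \<theta> + f2 \<theta>)
           (\<lambda>t b. g1 t b + g2 t b) (\<lambda>t b. h1 t b + h2 t b)"
  using assms by (auto simp: dc_decomposition_def intro!: convex_on_add)

lemma dc_decomposition_cmult:
  assumes "0 \<le> c" "dc_decomposition n B Xs i f g h"
  shows "dc_decomposition n B Xs i (\<lambda>\<theta>. c * f \<theta>) (\<lambda>t b. c * g t b) (\<lambda>t b. c * h t b)"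
  using assms by (auto simp: dc_decomposition_def right_diff_distrib intro!: convex_on_cmul)

lemma dc_decomposition_uminus:
  assumes "dc_decomposition n B Xs i f g h"
  shows "dc_decomposition n B Xs i (\<lambda>\<theta>. - f \<theta>) h g"
  using assms by (auto simp: dc_decomposition_def)

lemma dc_decomposition_max:
  assumes "dc_decomposition n B Xs i f1 g1 h1" "dc_decomposition n B Xs i f2 g2 h2"
  shows "dc_decomposition n B Xs i (\<lambda>\<theta>. max (f1 \<theta>) (f2 \<theta>))
           (\<lambda>t b. max (g1 t b + h2 t b) (g2 t b + h1 t b)) (\<lambda>t b. h1 t b + h2 t b)"
proof -
  have "max (a - b) (c - d) = max (a + d) (c + b) - (b + d)" for a b c d :: real
    by (simp add: max_def)
  with assms show ?thesis
    by (auto simp: dc_decomposition_def intro!: convex_on_add convex_on_max)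
qed

lemma BDC_add:
  assumes "BDC n B Xs f1" "BDC n B Xs f2"
  shows "BDC n B Xs (\<lambda>\<theta>. f1 \<theta> + f2 \<theta>)"
  using assms unfolding BDC_iff_dc_decomposition by (blast intro: dc_decomposition_add)

lemma BDC_uminus:
  assumes "BDC n B Xs f"
  shows "BDC n B Xs (\<lambda>\<theta>. - f \<theta>)"
  using assms unfolding BDC_iff_dc_decomposition by (blast intro: dc_decomposition_uminus)

lemma BDC_cmult:
  assumes "BDC n B Xs f"
  shows "BDC n B Xs (\<lambda>\<theta>. c * f \<theta>)"
proof -
  have nonneg: "BDC n B Xs (\<lambda>\<theta>. a * f \<theta>)" if "0 \<le> a" for a
    using assms unfolding BDC_iff_dc_decomposition by (blast intro: dc_decomposition_cmult[OF that])
  show ?thesis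
  proof (cases "0 \<le> c")
    case False
    then show ?thesis
      using BDC_uminus[OF nonneg[of "- c"]] by simp
  qed (rule nonneg)
qed

lemma BDC_max:
  assumes "BDC n B Xs f1" "BDC n B Xs f2"
  shows "BDC n B Xs (\<lambda>\<theta>. max (f1 \<theta>) (f2 \<theta>))"
  using assms unfolding BDC_iff_dc_decomposition by (blast intro: dc_decomposition_max)

lemma BDC_min:
  assumes "BDC n B Xs f1" "BDC n B Xs f2"
  shows "BDC n B Xs (\<lambda>\<theta>. min (f1 \<theta>) (f2 \<theta>))"
proof -
  have "min a b = - max (- a) (- b)" for a b :: real
    by linarith
  then show ?thesis
    using BDC_uminus[OF BDC_max[OF BDC_uminus[OF assms(1)] BDC_uminus[OF assms(2)]]] by simp
qed

text \<open>Nonemptiness is needed: convex_on includes convexity of the domain, so the empty sum 0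
is BDC only when the sets Xs i are convex.\<close>

lemma BDC_sum:
  assumes "finite A" "A \<noteq> {}" "\<And>r. r \<in> A \<Longrightarrow> BDC n B Xs (f r)"
  shows "BDC n B Xs (\<lambda>\<theta>. \<Sum>r\<in>A. f r \<theta>)"
  using assms by (induction A rule: finite_ne_induct) (simp_all add: BDC_add)

lemma BDC_Max:
  assumes "finite A" "A \<noteq> {}" "\<And>r. r \<in> A \<Longrightarrow> BDC n B Xs (f r)"
  shows "BDC n B Xs (\<lambda>\<theta>. Max ((\<lambda>r. f r \<theta>) ` A))"
  using assms by (induction A rule: finite_ne_induct) (simp_all add: BDC_max)

lemma BDC_Min:
  assumes "finite A" "A \<noteq> {}" "\<And>r. r \<in> A \<Longrightarrow> BDC n B Xs (f r)"
  shows "BDC n B Xs (\<lambda>\<theta>. Min ((\<lambda>r. f r \<theta>) ` A))"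
  using assms by (induction A rule: finite_ne_induct) (simp_all add: BDC_min)

theorem proposition3p1:
  fixes n m :: nat
    and B :: "nat \<Rightarrow> ('k::finite) set"
    and Xs :: "nat \<Rightarrow> (real^'k) set"
    and f :: "nat \<Rightarrow> real^'k \<Rightarrow> real"
    and \<alpha> :: "nat \<Rightarrow> real"
  assumes "is_block_partition n B"
    and "\<And>i. i < n \<Longrightarrow> Xs i \<subseteq> {x. \<forall>j. j \<notin> B i \<longrightarrow> x $ j = 0}"
    and "m \<ge> 1"
    and "\<And>r. r < m \<Longrightarrow> BDC n B Xs (f r)"
  shows "BDC n B Xs (\<lambda>\<theta>. \<Sum>r<m. \<alpha> r * f r \<theta>) \<and>
         BDC n B Xs (\<lambda>\<theta>. Max ((\<lambda>r. f r \<theta>) ` {..<m})) \<and>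
         BDC n B Xs (\<lambda>\<theta>. Min ((\<lambda>r. f r \<theta>) ` {..<m}))"
proof -
  have nonempty: "{..<m} \<noteq> {}"
    using assms(3) by (simp add: lessThan_empty_iff)
  have members: "BDC n B Xs (f r)" if "r \<in> {..<m}" for r
    using that assms(4) by simp
  have scaled: "BDC n B Xs (\<lambda>\<theta>. \<alpha> r * f r \<theta>)" if "r \<in> {..<m}" for r
    using members[OF that] by (rule BDC_cmult)
  show ?thesis
    using nonempty scaled members by (intro conjI BDC_sum BDC_Max BDC_Min finite_lessThan)
qed

end
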